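(* Let $L$ be a multisorted algebra in the positive quantifier-free signature satisfying axioms (0), (1), (2). Let $k_1+\dots+k_m=n$, let $c_i\colon k_i\to n$ ($i=1,\dots,m$) be the partitioning cylindrifications, and for each $i$ let $F^i$ be a prime filter on sort $k_i$ of $L$. Then there is a prime filter $G$ on sort $n$ of $L$ such that for each $i=1,\dots,m$ and every $r$ of sort $k_i$, we have $c_i(r)\in G$ if and only if $r\in F^i$.
   Context: Signature. There is a sort $n$ for each natural number $n\ge 0$. For every function $\alpha\colon\{1,\dots,n\}\to\{1,\dots,k\}$ there is a unary function symbol ("substitution") $\alpha\colon n\to k$ (argument of sort $n$, value of sort $k$). For each sort there are constants $0,1$ and binary operations $\vee,\wedge$ (the positive quantifier-free signature). Partitioning cylindrifications: given $k_1,\dots,k_m$ and $n=k_1+\dots+k_m$, the substitutions $c_i\colon k_i\to n$ given by the functions $c_i(l)=l+\sum_{j<i}k_j$. In an algebra, $x\le y$ (also $y\ge x$) means $x=x\wedge y$. Axioms: (0) For all partitioning cylindrifications $c_1,\dots,c_m$, $c_i\colon k_i\to k_1+\dots+k_m$, and all $r_i,s_i$ of sort $k_i$: if $\bigvee_{i=1}^m c_i(s_i)\ge\bigwedge_{i=1}^m c_i(r_i)$ then $s_i\ge r_i$ for some $i$ (including the case $m=0$, which says $0\ge1$ fails in sort $0$). (1) Each sort is a bounded distributive lattice under $0,1,\vee,\wedge$. (2) Every substitution preserves $0,1,\vee,\wedge$. A prime filter of a bounded distributive lattice is a proper, nonempty, upward-closed subset closed under $\wedge$ such that $x\vee y\in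 F$ implies $x\in F$ or $y\in F$. The Boolean prime ideal theorem is assumed. *)

theory Defs
  imports "HOL-Library.FuncSet"
begin

(* A substitution symbol alpha : n -> k is a function {1..n} -> {1..k},
  represented extensionally (alpha \<in> {1..n} \<rightarrow>\<^sub>E {1..k});
  sub n k alpha is its interpretation. *)

record 'a msa =
  car  :: "nat \<Rightarrow> 'a set"
  zer  :: "nat \<Rightarrow> 'a"
  one  :: "nat \<Rightarrow> 'a"
  join :: "nat \<Rightarrow> 'a \<Rightarrow> 'a \<Rightarrow> 'a"
  meet :: "nat \<Rightarrow> 'a \<Rightarrow> 'a \<Rightarrow> 'a"
  sub  :: "nat \<Rightarrow> nat \<Rightarrow> (nat \<Rightarrow> nat) \<Rightarrow> 'a \<Rightarrow> 'a"

definition mle :: "'a msa \<Rightarrow> nat \<Rightarrow> 'a \<Rightarrow> 'a \<Rightarrow> bool" where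
  "mle L n x y \<longleftrightarrow> x = meet L n x y"

definition bigjoin :: "'a msa \<Rightarrow> nat \<Rightarrow> 'a list \<Rightarrow> 'a" where
  "bigjoin L n xs = foldr (join L n) xs (zer L n)"

definition bigmeet :: "'a msa \<Rightarrow> nat \<Rightarrow> 'a list \<Rightarrow> 'a" where
  "bigmeet L n xs = foldr (meet L n) xs (one L n)"

(* Partitioning cylindrifications for ks = [k_1,...,k_m] (0-indexed i < m):
  c_i(l) = l + sum_{j<i} k_j, as a function {1..k_i} -> {1..k_1+...+k_m}. *)
definition cyl :: "nat list \<Rightarrow> nat \<Rightarrow> (nat \<Rightarrow> nat)" where
  "cyl ks i = restrict (\<lambda>l. l + sum_list (take i ks)) {1..ks ! i}"

definition cylop :: "'a msa \<Rightarrow> nat list \<Rightarrow> nat \<Rightarrow> 'a \<Rightarrow> 'a" where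
  "cylop L ks i = sub L (ks ! i) (sum_list ks) (cyl ks i)"

definition bdl_sort :: "'a msa \<Rightarrow> nat \<Rightarrow> bool" where
  "bdl_sort L n \<longleftrightarrow>
     zer L n \<in> car L n \<and> one L n \<in> car L n \<and>
     (\<forall>x\<in>car L n. \<forall>y\<in>car L n. join L n x y \<in> car L n \<and> meet L n x y \<in> car L n) \<and>
     (\<forall>x\<in>car L n. \<forall>y\<in>car L n. \<forall>z\<in>car L n.
        join L n (join L n x y) z = join L n x (join L n y z) \<and>
        meet L n (meet L n x y) z = meet L n x (meet L n y z) \<and>
        meet L n x (join L n y z) = join L n (meet L n x y) (meet L n x z)) \<and>
     (\<forall>x\<in>car L n. \<forall>y\<in>car L n.
        join L n x y = join L n y x \<and> meet L n x y = meet L n y x \<and>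
        join L n x (meet L n x y) = x \<and> meet L n x (join L n x y) = x) \<and>
     (\<forall>x\<in>car L n. join L n (zer L n) x = x \<and> meet L n (one L n) x = x)"

definition subst_hom :: "'a msa \<Rightarrow> bool" where
  "subst_hom L \<longleftrightarrow>
     (\<forall>n k \<alpha>. \<alpha> \<in> {1..n} \<rightarrow>\<^sub>E {1..k} \<longrightarrow>
        (\<forall>x\<in>car L n. sub L n k \<alpha> x \<in> car L k) \<and>
        sub L n k \<alpha> (zer L n) = zer L k \<and> sub L n k \<alpha> (one L n) = one L k \<and>
        (\<forall>x\<in>car L n. \<forall>y\<in>car L n.
           sub L n k \<alpha> (join L n x y) = join L k (sub L n k \<alpha> x) (sub L n k \<alpha> y) \<and>
           sub L n k \<alpha> (meet L n x y) = meet L k (sub L n k \<alpha> x) (sub L n k \<alpha> y)))"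

definition axiom0 :: "'a msa \<Rightarrow> bool" where
  "axiom0 L \<longleftrightarrow>
     (\<forall>ks r s. (\<forall>i<length ks. r i \<in> car L (ks ! i) \<and> s i \<in> car L (ks ! i)) \<longrightarrow>
        mle L (sum_list ks)
          (bigmeet L (sum_list ks) (map (\<lambda>i. cylop L ks i (r i)) [0..<length ks]))
          (bigjoin L (sum_list ks) (map (\<lambda>i. cylop L ks i (s i)) [0..<length ks]))
        \<longrightarrow> (\<exists>i<length ks. mle L (ks ! i) (r i) (s i)))"

definition msalg :: "'a msa \<Rightarrow> bool" where
  "msalg L \<longleftrightarrow> axiom0 L \<and> (\<forall>n. bdl_sort L n) \<and> subst_hom L"

definition prime_filter :: "'a msa \<Rightarrow> nat \<Rightarrow> 'a set \<Rightarrow> bool" where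
  "prime_filter L n F \<longleftrightarrow>
     F \<subseteq> car L n \<and> F \<noteq> car L n \<and> F \<noteq> {} \<and>
     (\<forall>x\<in>F. \<forall>y\<in>car L n. mle L n x y \<longrightarrow> y \<in> F) \<and>
     (\<forall>x\<in>F. \<forall>y\<in>F. meet L n x y \<in> F) \<and>
     (\<forall>x\<in>car L n. \<forall>y\<in>car L n. join L n x y \<in> F \<longrightarrow> x \<in> F \<or> y \<in> F)"

end

theory Submission imports Defs begin

text \<open>
  The images under c_i of the elements of F^i have to lie in G, the images of the other
  elements of sort k_i must not. By the prime filter theorem for distributive lattices such
  a G exists as soon as no finite meet of elements of the first kind lies below a finite join
  of elements of the second kind. Grouping such a meet and such a join by the index i turns
  an inequality of this kind into one of the form  meet_i c_i(r_i) <= join_i c_i(s_i)  with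
  r_i in F^i and s_i not in F^i, and axiom (0) then gives r_i <= s_i for some i, which is
  impossible for a filter F^i.
\<close>

locale lattice_sort =
  fixes L :: "'a msa" and n :: nat
  assumes bdl: "bdl_sort L n"
begin

abbreviation "A \<equiv> car L n"
abbreviation "mt \<equiv> meet L n"
abbreviation "jn \<equiv> join L n"
abbreviation "le \<equiv> mle L n"

lemma zer_closed: "zer L n \<in> A"
  and one_closed: "one L n \<in> A"
  and meet_closed: "x \<in> A \<Longrightarrow> y \<in> A \<Longrightarrow> mt x y \<in> A"
  and join_closed: "x \<in> A \<Longrightarrow> y \<in> A \<Longrightarrow> jn x y \<in> A"
  using bdl unfolding bdl_sort_def by auto

lemma meet_assoc: "x \<in> A \<Longrightarrow> y \<in> A \<Longrightarrow> z \<in> A \<Longrightarrow> mt (mt x y) z = mt x (mt y z)"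
  and meet_join_distrib: "x \<in> A \<Longrightarrow> y \<in> A \<Longrightarrow> z \<in> A \<Longrightarrow> mt x (jn y z) = jn (mt x y) (mt x z)"
  and join_comm: "x \<in> A \<Longrightarrow> y \<in> A \<Longrightarrow> jn x y = jn y x"
  and meet_comm: "x \<in> A \<Longrightarrow> y \<in> A \<Longrightarrow> mt x y = mt y x"
  and join_meet_absorb: "x \<in> A \<Longrightarrow> y \<in> A \<Longrightarrow> jn x (mt x y) = x"
  and meet_join_absorb: "x \<in> A \<Longrightarrow> y \<in> A \<Longrightarrow> mt x (jn x y) = x"
  and zer_join: "x \<in> A \<Longrightarrow> jn (zer L n) x = x"
  and one_meet: "x \<in> A \<Longrightarrow> mt (one L n) x = x"
  using bdl unfolding bdl_sort_def by blast+

lemma meet_idem: "x \<in> A \<Longrightarrow> mt x x = x"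
  using meet_join_absorb[of x "mt x x"] join_meet_absorb[of x x] by (simp add: meet_closed)

lemma le_refl: "x \<in> A \<Longrightarrow> le x x"
  by (simp add: mle_def meet_idem)

lemma le_trans:
  assumes "x \<in> A" "y \<in> A" "z \<in> A" "le x y" "le y z"
  shows "le x z"
  using assms(4,5) meet_assoc[OF assms(1-3)] unfolding mle_def by (simp add: eq_commute)

lemma meet_le1: "x \<in> A \<Longrightarrow> y \<in> A \<Longrightarrow> le (mt x y) x"
  unfolding mle_def
  using meet_assoc[of x y x] meet_comm[of y x] meet_assoc[of x x y] by (simp add: meet_idem)

lemma meet_le2: "x \<in> A \<Longrightarrow> y \<in> A \<Longrightarrow> le (mt x y) y"
  unfolding mle_def using meet_assoc[of x y y] by (simp add: meet_idem)

lemma le_meetI: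
  assumes "w \<in> A" "x \<in> A" "y \<in> A" "le w x" "le w y"
  shows "le w (mt x y)"
  using assms(4,5) meet_assoc[OF assms(1-3)] unfolding mle_def by (simp add: eq_commute)

lemma join_ge1: "x \<in> A \<Longrightarrow> y \<in> A \<Longrightarrow> le x (jn x y)"
  unfolding mle_def by (simp add: meet_join_absorb)

lemma join_ge2: "x \<in> A \<Longrightarrow> y \<in> A \<Longrightarrow> le y (jn x y)"
  unfolding mle_def using join_comm[of x y] by (simp add: meet_join_absorb)

lemma join_leI:
  assumes "x \<in> A" "y \<in> A" "z \<in> A" "le x z" "le y z"
  shows "le (jn x y) z"
proof -
  have "mt (jn x y) z = jn (mt z x) (mt z y)"
    using assms(1-3) by (simp add: meet_comm join_closed meet_join_distrib)
  also have "\<dots> = jn x y"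
    using assms unfolding mle_def by (simp add: meet_comm)
  finally show ?thesis unfolding mle_def by simp
qed

lemma le_one: "x \<in> A \<Longrightarrow> le x (one L n)"
  unfolding mle_def using meet_comm[of x "one L n"] by (simp add: one_meet one_closed)

lemma zer_le: "x \<in> A \<Longrightarrow> le (zer L n) x"
  unfolding mle_def using meet_join_absorb[of "zer L n" x] by (simp add: zer_closed zer_join)

lemma meet_mono_left: "x \<in> A \<Longrightarrow> y \<in> A \<Longrightarrow> z \<in> A \<Longrightarrow> le x y \<Longrightarrow> le (mt x z) (mt y z)"
  by (meson le_meetI le_trans meet_closed meet_le1 meet_le2)

lemma bigmeet_closed: "set xs \<subseteq> A \<Longrightarrow> bigmeet L n xs \<in> A"
  by (induction xs) (auto simp: bigmeet_def one_closed meet_closed)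

lemma bigjoin_closed: "set xs \<subseteq> A \<Longrightarrow> bigjoin L n xs \<in> A"
  by (induction xs) (auto simp: bigjoin_def zer_closed join_closed)

lemma bigmeet_le: "set xs \<subseteq> A \<Longrightarrow> x \<in> set xs \<Longrightarrow> le (bigmeet L n xs) x"
proof (induction xs)
  case (Cons a xs)
  have a: "a \<in> A" and b: "bigmeet L n xs \<in> A"
    using Cons.prems bigmeet_closed by auto
  have "bigmeet L n (a # xs) = mt a (bigmeet L n xs)"
    by (simp add: bigmeet_def)
  moreover have "le (mt a (bigmeet L n xs)) x"
  proof (cases "x = a")
    case True
    then show ?thesis using meet_le1[OF a b] by simp
  next
    case False
    with Cons have "le (bigmeet L n xs) x" "x \<in> A" by auto
    then show ?thesis using le_trans[OF meet_closed[OF a b] b] meet_le2[OF a b] by blast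
  qed
  ultimately show ?case by simp
qed simp

lemma le_bigmeetI: "set xs \<subseteq> A \<Longrightarrow> w \<in> A \<Longrightarrow> \<forall>x\<in>set xs. le w x \<Longrightarrow> le w (bigmeet L n xs)"
  by (induction xs) (auto simp: bigmeet_def le_one le_meetI bigmeet_closed[unfolded bigmeet_def])

lemma bigjoin_ge: "set xs \<subseteq> A \<Longrightarrow> x \<in> set xs \<Longrightarrow> le x (bigjoin L n xs)"
proof (induction xs)
  case (Cons a xs)
  have a: "a \<in> A" and b: "bigjoin L n xs \<in> A"
    using Cons.prems bigjoin_closed by auto
  have "bigjoin L n (a # xs) = jn a (bigjoin L n xs)"
    by (simp add: bigjoin_def)
  moreover have "le x (jn a (bigjoin L n xs))"
  proof (cases "x = a")
    case True
    then show ?thesis using join_ge1[OF a b] by simp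
  next
    case False
    with Cons have "le x (bigjoin L n xs)" "x \<in> A" by auto
    then show ?thesis using le_trans[OF _ b join_closed[OF a b]] join_ge2[OF a b] by blast
  qed
  ultimately show ?case by simp
qed simp

lemma bigjoin_leI: "set xs \<subseteq> A \<Longrightarrow> w \<in> A \<Longrightarrow> \<forall>x\<in>set xs. le x w \<Longrightarrow> le (bigjoin L n xs) w"
  by (induction xs) (auto simp: bigjoin_def zer_le join_leI bigjoin_closed[unfolded bigjoin_def])

lemma bigmeet_mono:
  assumes "set xs \<subseteq> A" "set ys \<subseteq> A" "\<forall>y\<in>set ys. \<exists>x\<in>set xs. le x y"
  shows "le (bigmeet L n xs) (bigmeet L n ys)"
  using assms by (meson bigmeet_closed bigmeet_le le_bigmeetI le_trans subsetD)

lemma bigjoin_mono: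
  assumes "set xs \<subseteq> A" "set ys \<subseteq> A" "\<forall>x\<in>set xs. \<exists>y\<in>set ys. le x y"
  shows "le (bigjoin L n xs) (bigjoin L n ys)"
  using assms by (meson bigjoin_closed bigjoin_ge bigjoin_leI le_trans subsetD)

definition is_filter :: "'a set \<Rightarrow> bool" where
  "is_filter G \<longleftrightarrow> G \<subseteq> A \<and> (\<forall>x\<in>G. \<forall>y\<in>A. le x y \<longrightarrow> y \<in> G) \<and> (\<forall>x\<in>G. \<forall>y\<in>G. mt x y \<in> G)"

definition is_ideal :: "'a set \<Rightarrow> bool" where
  "is_ideal I \<longleftrightarrow> I \<subseteq> A \<and> (\<forall>y\<in>I. \<forall>x\<in>A. le x y \<longrightarrow> x \<in> I) \<and> (\<forall>x\<in>I. \<forall>y\<in>I. jn x y \<in> I)"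

definition filter_generated :: "'a set \<Rightarrow> 'a set" where
  "filter_generated S = {z \<in> A. \<exists>xs. set xs \<subseteq> S \<and> le (bigmeet L n xs) z}"

definition ideal_generated :: "'a set \<Rightarrow> 'a set" where
  "ideal_generated T = {z \<in> A. \<exists>ys. set ys \<subseteq> T \<and> le z (bigjoin L n ys)}"

lemma is_filter_filter_generated:
  assumes "S \<subseteq> A"
  shows "is_filter (filter_generated S)"
  unfolding is_filter_def
proof (intro conjI ballI impI)
  show "filter_generated S \<subseteq> A" by (auto simp: filter_generated_def)
next
  fix x y assume "x \<in> filter_generated S" "y \<in> A" "le x y"
  then show "y \<in> filter_generated S"
    using assms unfolding filter_generated_def
    by (blast intro: le_trans[OF bigmeet_closed])
next
  fix x y assume "x \<in> filter_generated S" "y \<in> filter_generated S"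
  then obtain xs ys where x: "x \<in> A" "set xs \<subseteq> S" "le (bigmeet L n xs) x"
    and y: "y \<in> A" "set ys \<subseteq> S" "le (bigmeet L n ys) y"
    by (auto simp: filter_generated_def)
  have S: "set xs \<subseteq> A" "set ys \<subseteq> A" "set (xs @ ys) \<subseteq> A" using x y assms by auto
  have "le (bigmeet L n (xs @ ys)) (bigmeet L n xs)" "le (bigmeet L n (xs @ ys)) (bigmeet L n ys)"
    using S by (intro bigmeet_mono; force intro: le_refl)+
  then have "le (bigmeet L n (xs @ ys)) (mt x y)"
    using S x y by (meson bigmeet_closed le_meetI le_trans)
  then show "mt x y \<in> filter_generated S"
    using x y by (auto simp: filter_generated_def meet_closed intro!: exI[of _ "xs @ ys"])
qed

lemma is_ideal_ideal_generated:
  assumes "T \<subseteq> A"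
  shows "is_ideal (ideal_generated T)"
  unfolding is_ideal_def
proof (intro conjI ballI impI)
  show "ideal_generated T \<subseteq> A" by (auto simp: ideal_generated_def)
next
  fix y x assume "y \<in> ideal_generated T" "x \<in> A" "le x y"
  then show "x \<in> ideal_generated T"
    using assms unfolding ideal_generated_def
    by (blast intro: le_trans[OF _ _ bigjoin_closed])
next
  fix x y assume "x \<in> ideal_generated T" "y \<in> ideal_generated T"
  then obtain xs ys where x: "x \<in> A" "set xs \<subseteq> T" "le x (bigjoin L n xs)"
    and y: "y \<in> A" "set ys \<subseteq> T" "le y (bigjoin L n ys)"
    by (auto simp: ideal_generated_def)
  have S: "set xs \<subseteq> A" "set ys \<subseteq> A" "set (xs @ ys) \<subseteq> A" using x y assms by auto
  have "le (bigjoin L n xs) (bigjoin L n (xs @ ys))" "le (bigjoin L n ys) (bigjoin L n (xs @ ys))"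
    using S by (intro bigjoin_mono; force intro: le_refl)+
  then have "le (jn x y) (bigjoin L n (xs @ ys))"
    using S x y by (meson bigjoin_closed join_leI le_trans)
  then show "jn x y \<in> ideal_generated T"
    using x y by (auto simp: ideal_generated_def join_closed intro!: exI[of _ "xs @ ys"])
qed

lemma subset_filter_generated: "S \<subseteq> A \<Longrightarrow> S \<subseteq> filter_generated S"
  unfolding filter_generated_def by (auto intro!: exI[of _ "[_]"] bigmeet_le)

lemma subset_ideal_generated: "T \<subseteq> A \<Longrightarrow> T \<subseteq> ideal_generated T"
  unfolding ideal_generated_def by (auto intro!: exI[of _ "[_]"] bigjoin_ge)

lemma is_filter_Union_chain:
  assumes "\<forall>G\<in>K. is_filter G" and "\<forall>X\<in>K. \<forall>Y\<in>K. X \<subseteq> Y \<or> Y \<subseteq> X"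
  shows "is_filter (\<Union>K)"
  unfolding is_filter_def
proof (intro conjI ballI impI)
  show "\<Union>K \<subseteq> A" using assms(1) by (auto simp: is_filter_def)
next
  fix x y assume "x \<in> \<Union>K" "y \<in> A" "le x y"
  then show "y \<in> \<Union>K" using assms(1) unfolding is_filter_def by blast
next
  fix x y assume "x \<in> \<Union>K" "y \<in> \<Union>K"
  then obtain G where "G \<in> K" "x \<in> G" "y \<in> G" using assms(2) by blast
  then show "mt x y \<in> \<Union>K" using assms(1) unfolding is_filter_def by blast
qed

lemma is_filter_adjoin:
  assumes "is_filter G" "x \<in> A"
  shows "is_filter {z \<in> A. \<exists>g\<in>G. le (mt g x) z}"
  unfolding is_filter_def
proof (intro conjI ballI impI)
  have GA: "G \<subseteq> A" using assms(1) by (simp add: is_filter_def)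
  show "{z \<in> A. \<exists>g\<in>G. le (mt g x) z} \<subseteq> A" by blast
  fix a b assume "a \<in> {z \<in> A. \<exists>g\<in>G. le (mt g x) z}"
  then obtain g where a: "a \<in> A" and g: "g \<in> A" "g \<in> G" "le (mt g x) a" using GA by blast
  {
    assume "b \<in> A" "le a b"
    then show "b \<in> {z \<in> A. \<exists>g\<in>G. le (mt g x) z}"
      using g a le_trans[OF meet_closed[OF g(1) assms(2)]] by blast
  next
    assume "b \<in> {z \<in> A. \<exists>g\<in>G. le (mt g x) z}"
    then obtain h where b: "b \<in> A" and h: "h \<in> A" "h \<in> G" "le (mt h x) b" using GA by blast
    have gh: "mt g h \<in> A" "mt g h \<in> G" "mt (mt g h) x \<in> A"
      using g h assms by (auto simp: is_filter_def meet_closed)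
    have "le (mt (mt g h) x) (mt g x)" "le (mt (mt g h) x) (mt h x)"
      using g h assms(2) gh by (auto intro: meet_mono_left meet_le1 meet_le2)
    then have "le (mt (mt g h) x) (mt a b)"
      using a b g h gh assms(2) by (meson le_meetI le_trans meet_closed)
    then show "mt a b \<in> {z \<in> A. \<exists>g\<in>G. le (mt g x) z}"
      using a b gh by (auto intro: meet_closed)
  }
qed

lemma maximal_filter_prime:
  assumes G: "is_filter G" "one L n \<in> G" "G \<inter> I = {}"
    and I: "is_ideal I" "zer L n \<in> I"
    and maximal: "\<And>H. is_filter H \<Longrightarrow> G \<subseteq> H \<Longrightarrow> H \<inter> I = {} \<Longrightarrow> H = G"
  shows "prime_filter L n G"
proof -
  have GA: "G \<subseteq> A" and meetG: "\<And>x y. x \<in> G \<Longrightarrow> y \<in> G \<Longrightarrow> mt x y \<in> G"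
    using G(1) by (auto simp: is_filter_def)
  have downI: "\<And>x y. y \<in> I \<Longrightarrow> x \<in> A \<Longrightarrow> le x y \<Longrightarrow> x \<in> I"
    using I(1) by (auto simp: is_ideal_def)
  have outside: "\<exists>g\<in>G. mt g x \<in> I" if x: "x \<in> A" "x \<notin> G" for x
  proof -
    let ?H = "{z \<in> A. \<exists>g\<in>G. le (mt g x) z}"
    have "G \<subseteq> ?H" using GA x by (blast intro: meet_le1)
    moreover have "x \<in> ?H" using G(2) x by (blast intro: meet_le2 one_closed)
    ultimately have "?H \<inter> I \<noteq> {}" using maximal[OF is_filter_adjoin[OF G(1) x(1)]] x(2) by blast
    then obtain z g where "z \<in> I" "g \<in> G" "le (mt g x) z" by blast
    moreover have "mt g x \<in> A" using \<open>g \<in> G\<close> GA x(1) meet_closed by blast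
    ultimately show ?thesis using downI by blast
  qed
  have "x \<in> G \<or> y \<in> G" if xy: "x \<in> A" "y \<in> A" "jn x y \<in> G" for x y
  proof (rule ccontr)
    assume "\<not> (x \<in> G \<or> y \<in> G)"
    then obtain g h where gh: "g \<in> G" "h \<in> G" "mt g x \<in> I" "mt h y \<in> I"
      using outside xy by blast
    define k where "k = mt g h"
    have k: "k \<in> A" "k \<in> G" and g: "g \<in> A" and h: "h \<in> A"
      using gh GA meetG by (auto simp: k_def meet_closed)
    have "le (mt k x) (mt g x)" "le (mt k y) (mt h y)"
      using g h xy unfolding k_def by (auto intro: meet_mono_left meet_le1 meet_le2 meet_closed)
    then have "mt k x \<in> I" "mt k y \<in> I"
      using downI gh(3,4) k(1) xy(1,2) meet_closed by blast+
    then have "mt k (jn x y) \<in> I"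
      using I(1) by (simp add: is_ideal_def meet_join_distrib k xy)
    moreover have "mt k (jn x y) \<in> G" using meetG k xy by blast
    ultimately show False using G(3) by blast
  qed
  moreover have "G \<noteq> A" using G(3) I(2) zer_closed by blast
  ultimately show ?thesis
    using G(1,2) unfolding prime_filter_def is_filter_def by blast
qed

theorem prime_filter_theorem:
  assumes F: "is_filter F" "one L n \<in> F"
    and I: "is_ideal I" "zer L n \<in> I"
    and disjoint: "F \<inter> I = {}"
  shows "\<exists>G. prime_filter L n G \<and> F \<subseteq> G \<and> G \<inter> I = {}"
proof -
  define C where "C = {G. is_filter G \<and> F \<subseteq> G \<and> G \<inter> I = {}}"
  have "\<exists>G\<in>C. \<forall>H\<in>C. G \<subseteq> H \<longrightarrow> H = G"
  proof (rule subset_Zorn_nonempty)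
    show "C \<noteq> {}" using F disjoint by (auto simp: C_def)
  next
    fix K assume K: "K \<noteq> {}" "subset.chain C K"
    then have "K \<subseteq> C" and chain: "\<forall>X\<in>K. \<forall>Y\<in>K. X \<subseteq> Y \<or> Y \<subseteq> X"
      unfolding subset.chain_def by blast+
    then have "\<forall>G\<in>K. is_filter G" "\<forall>G\<in>K. F \<subseteq> G" "\<forall>G\<in>K. G \<inter> I = {}"
      unfolding C_def by blast+
    then show "\<Union>K \<in> C"
      unfolding C_def using is_filter_Union_chain[OF _ chain] K(1) by blast
  qed
  then obtain G where "G \<in> C" and maximal: "\<forall>H\<in>C. G \<subseteq> H \<longrightarrow> H = G" by blast
  then have G: "is_filter G" "F \<subseteq> G" "G \<inter> I = {}" by (simp_all add: C_def)
  have "prime_filter L n G"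
  proof (rule maximal_filter_prime[OF G(1) _ G(3) I])
    show "one L n \<in> G" using F(2) G(2) by blast
    show "H = G" if "is_filter H" "G \<subseteq> H" "H \<inter> I = {}" for H
      using maximal that G(2) by (simp add: C_def)
  qed
  with G show ?thesis by blast
qed

corollary prime_filter_separation:
  assumes "S \<subseteq> A" "T \<subseteq> A"
    and separated: "\<And>xs ys. set xs \<subseteq> S \<Longrightarrow> set ys \<subseteq> T \<Longrightarrow> \<not> le (bigmeet L n xs) (bigjoin L n ys)"
  shows "\<exists>G. prime_filter L n G \<and> S \<subseteq> G \<and> G \<inter> T = {}"
proof -
  have "filter_generated S \<inter> ideal_generated T = {}"
  proof (rule ccontr)
    assume "filter_generated S \<inter> ideal_generated T \<noteq> {}"
    then obtain z xs ys where z: "z \<in> A" "le (bigmeet L n xs) z" "le z (bigjoin L n ys)"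
      and xs: "set xs \<subseteq> S" and ys: "set ys \<subseteq> T"
      by (auto simp: filter_generated_def ideal_generated_def)
    have "set xs \<subseteq> A" "set ys \<subseteq> A" using xs ys assms(1,2) by auto
    then have "le (bigmeet L n xs) (bigjoin L n ys)"
      using le_trans[OF bigmeet_closed z(1) bigjoin_closed z(2,3)] by blast
    with separated xs ys show False by blast
  qed
  moreover have "one L n \<in> filter_generated S" "zer L n \<in> ideal_generated T"
    by (auto simp: filter_generated_def ideal_generated_def bigmeet_def bigjoin_def
        one_closed zer_closed le_refl intro!: exI[of _ "[]"])
  ultimately obtain G where "prime_filter L n G" "filter_generated S \<subseteq> G" "G \<inter> ideal_generated T = {}"
    using prime_filter_theorem is_filter_filter_generated is_ideal_ideal_generated assms(1,2) by meson
  then show ?thesis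
    using subset_filter_generated[OF assms(1)] subset_ideal_generated[OF assms(2)] by blast
qed

lemma prime_filter_one:
  assumes "prime_filter L n P" shows "one L n \<in> P"
  using assms le_one one_closed unfolding prime_filter_def by blast

lemma prime_filter_zer:
  assumes "prime_filter L n P" shows "zer L n \<notin> P"
  using assms zer_le unfolding prime_filter_def by blast

lemma prime_filter_bigmeet:
  assumes "prime_filter L n P" "set xs \<subseteq> P" shows "bigmeet L n xs \<in> P"
  using assms(2) by (induction xs)
    (use assms(1) prime_filter_one in \<open>auto simp: bigmeet_def prime_filter_def\<close>)

lemma prime_filter_bigjoin:
  assumes "prime_filter L n P" "set xs \<subseteq> A - P" shows "bigjoin L n xs \<in> A - P"
  using assms(2)
proof (induction xs)
  case Nil
  then show ?case using assms(1) prime_filter_zer zer_closed by (simp add: bigjoin_def)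
next
  case (Cons x xs)
  then have "x \<in> A - P" "bigjoin L n xs \<in> A - P" by auto
  moreover have "bigjoin L n (x # xs) = jn x (bigjoin L n xs)" by (simp add: bigjoin_def)
  ultimately show ?case using assms(1) join_closed unfolding prime_filter_def by auto
qed

end

lemma msalg_lattice_sort: "msalg L \<Longrightarrow> lattice_sort L k"
  by (simp add: msalg_def lattice_sort_def)

lemma cyl_funcset: "i < length ks \<Longrightarrow> cyl ks i \<in> {1..ks ! i} \<rightarrow>\<^sub>E {1..sum_list ks}"
proof -
  assume i: "i < length ks"
  have "sum_list (take i ks) + ks ! i = sum_list (take (Suc i) ks)"
    using i by (simp add: take_Suc_conv_app_nth)
  also have "\<dots> \<le> sum_list ks"
    by (metis append_take_drop_id le_add1 sum_list_append)
  finally show ?thesis unfolding cyl_def by auto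
qed

lemma
  assumes "subst_hom L" "i < length ks"
  shows cylop_closed: "x \<in> car L (ks ! i) \<Longrightarrow> cylop L ks i x \<in> car L (sum_list ks)"
    and cylop_meet: "x \<in> car L (ks ! i) \<Longrightarrow> y \<in> car L (ks ! i) \<Longrightarrow>
      cylop L ks i (meet L (ks ! i) x y) = meet L (sum_list ks) (cylop L ks i x) (cylop L ks i y)"
  using assms cyl_funcset[OF assms(2)] unfolding subst_hom_def cylop_def by blast+

lemma cylop_mono:
  assumes "subst_hom L" "i < length ks" "x \<in> car L (ks ! i)" "y \<in> car L (ks ! i)"
    and "mle L (ks ! i) x y"
  shows "mle L (sum_list ks) (cylop L ks i x) (cylop L ks i y)"
  using assms(5) cylop_meet[OF assms(1-4)] unfolding mle_def by metis

lemma bigmeet_cylinders_grouped: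
  fixes ps :: "(nat \<times> 'a) list"
  assumes L: "msalg L" and ps: "\<forall>(i, x)\<in>set ps. i < length ks \<and> x \<in> car L (ks ! i)"
  defines "r \<equiv> \<lambda>i. bigmeet L (ks ! i) [x. (j, x) \<leftarrow> ps, j = i]"
  shows "mle L (sum_list ks)
           (bigmeet L (sum_list ks) (map (\<lambda>i. cylop L ks i (r i)) [0..<length ks]))
           (bigmeet L (sum_list ks) (map (\<lambda>(i, x). cylop L ks i x) ps))"
proof -
  interpret lattice_sort L "sum_list ks" using L by (rule msalg_lattice_sort)
  have SH: "subst_hom L" using L by (simp add: msalg_def)
  have group: "set [x. (j, x) \<leftarrow> ps, j = i] \<subseteq> car L (ks ! i)" if "i < length ks" for i
    using ps by auto
  have r: "r i \<in> car L (ks ! i)" if "i < length ks" for i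
    using lattice_sort.bigmeet_closed[OF msalg_lattice_sort[OF L] group[OF that]] by (simp add: r_def)
  show ?thesis
  proof (rule bigmeet_mono)
    show "set (map (\<lambda>i. cylop L ks i (r i)) [0..<length ks]) \<subseteq> A"
      using cylop_closed[OF SH] r by auto
    show "set (map (\<lambda>(i, x). cylop L ks i x) ps) \<subseteq> A"
      using cylop_closed[OF SH] ps by auto
    show "\<forall>y\<in>set (map (\<lambda>(i, x). cylop L ks i x) ps).
        \<exists>z\<in>set (map (\<lambda>i. cylop L ks i (r i)) [0..<length ks]). le z y"
    proof
      fix y assume "y \<in> set (map (\<lambda>(i, x). cylop L ks i x) ps)"
      then obtain i x where ix: "(i, x) \<in> set ps" and y: "y = cylop L ks i x" by auto
      then have i: "i < length ks" and x: "x \<in> car L (ks ! i)" using ps by auto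
      have "mle L (ks ! i) (r i) x"
        unfolding r_def using lattice_sort.bigmeet_le[OF msalg_lattice_sort[OF L] group[OF i]] ix by force
      then have "le (cylop L ks i (r i)) y"
        using cylop_mono[OF SH i r[OF i] x] y by blast
      then show "\<exists>z\<in>set (map (\<lambda>i. cylop L ks i (r i)) [0..<length ks]). le z y"
        using i by force
    qed
  qed
qed

lemma bigjoin_cylinders_grouped:
  fixes qs :: "(nat \<times> 'a) list"
  assumes L: "msalg L" and qs: "\<forall>(i, x)\<in>set qs. i < length ks \<and> x \<in> car L (ks ! i)"
  defines "s \<equiv> \<lambda>i. bigjoin L (ks ! i) [x. (j, x) \<leftarrow> qs, j = i]"
  shows "mle L (sum_list ks)
           (bigjoin L (sum_list ks) (map (\<lambda>(i, x). cylop L ks i x) qs))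
           (bigjoin L (sum_list ks) (map (\<lambda>i. cylop L ks i (s i)) [0..<length ks]))"
proof -
  interpret lattice_sort L "sum_list ks" using L by (rule msalg_lattice_sort)
  have SH: "subst_hom L" using L by (simp add: msalg_def)
  have group: "set [x. (j, x) \<leftarrow> qs, j = i] \<subseteq> car L (ks ! i)" if "i < length ks" for i
    using qs by auto
  have s: "s i \<in> car L (ks ! i)" if "i < length ks" for i
    using lattice_sort.bigjoin_closed[OF msalg_lattice_sort[OF L] group[OF that]] by (simp add: s_def)
  show ?thesis
  proof (rule bigjoin_mono)
    show "set (map (\<lambda>(i, x). cylop L ks i x) qs) \<subseteq> A"
      using cylop_closed[OF SH] qs by auto
    show "set (map (\<lambda>i. cylop L ks i (s i)) [0..<length ks]) \<subseteq> A"
      using cylop_closed[OF SH] s by auto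
    show "\<forall>y\<in>set (map (\<lambda>(i, x). cylop L ks i x) qs).
        \<exists>z\<in>set (map (\<lambda>i. cylop L ks i (s i)) [0..<length ks]). le y z"
    proof
      fix y assume "y \<in> set (map (\<lambda>(i, x). cylop L ks i x) qs)"
      then obtain i x where ix: "(i, x) \<in> set qs" and y: "y = cylop L ks i x" by auto
      then have i: "i < length ks" and x: "x \<in> car L (ks ! i)" using qs by auto
      have "mle L (ks ! i) x (s i)"
        unfolding s_def using lattice_sort.bigjoin_ge[OF msalg_lattice_sort[OF L] group[OF i]] ix by force
      then have "le y (cylop L ks i (s i))"
        using cylop_mono[OF SH i x s[OF i]] y by blast
      then show "\<exists>z\<in>set (map (\<lambda>i. cylop L ks i (s i)) [0..<length ks]). le y z"
        using i by force
    qed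
  qed
qed

lemma cylinders_meet_not_below_join:
  fixes ps qs :: "(nat \<times> 'a) list"
  assumes L: "msalg L" and F: "\<forall>i<length ks. prime_filter L (ks ! i) (F i)"
    and ps: "\<forall>(i, r)\<in>set ps. i < length ks \<and> r \<in> F i"
    and qs: "\<forall>(i, s)\<in>set qs. i < length ks \<and> s \<in> car L (ks ! i) - F i"
  shows "\<not> mle L (sum_list ks) (bigmeet L (sum_list ks) (map (\<lambda>(i, x). cylop L ks i x) ps))
                                 (bigjoin L (sum_list ks) (map (\<lambda>(i, x). cylop L ks i x) qs))"
proof
  interpret lattice_sort L "sum_list ks" using L by (rule msalg_lattice_sort)
  have SH: "subst_hom L" using L by (simp add: msalg_def)
  have FA: "F i \<subseteq> car L (ks ! i)" if "i < length ks" for i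
    using F that by (simp add: prime_filter_def)
  define r where "r = (\<lambda>i. bigmeet L (ks ! i) [x. (j, x) \<leftarrow> ps, j = i])"
  define s where "s = (\<lambda>i. bigjoin L (ks ! i) [x. (j, x) \<leftarrow> qs, j = i])"
  have r: "r i \<in> F i" if "i < length ks" for i
    unfolding r_def using ps F that
    by (intro lattice_sort.prime_filter_bigmeet[OF msalg_lattice_sort[OF L]]) auto
  have s: "s i \<in> car L (ks ! i) - F i" if "i < length ks" for i
    unfolding s_def using qs F that
    by (intro lattice_sort.prime_filter_bigjoin[OF msalg_lattice_sort[OF L]]) auto
  let ?R = "map (\<lambda>i. cylop L ks i (r i)) [0..<length ks]"
  let ?S = "map (\<lambda>i. cylop L ks i (s i)) [0..<length ks]"
  assume "le (bigmeet L (sum_list ks) (map (\<lambda>(i, x). cylop L ks i x) ps))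
             (bigjoin L (sum_list ks) (map (\<lambda>(i, x). cylop L ks i x) qs))"
  moreover have "le (bigmeet L (sum_list ks) ?R) (bigmeet L (sum_list ks) (map (\<lambda>(i, x). cylop L ks i x) ps))"
    unfolding r_def using bigmeet_cylinders_grouped[OF L] ps FA by fast
  moreover have "le (bigjoin L (sum_list ks) (map (\<lambda>(i, x). cylop L ks i x) qs)) (bigjoin L (sum_list ks) ?S)"
    unfolding s_def using bigjoin_cylinders_grouped[OF L] qs by fast
  moreover have "set ?R \<subseteq> A" "set ?S \<subseteq> A"
    "set (map (\<lambda>(i, x). cylop L ks i x) ps) \<subseteq> A" "set (map (\<lambda>(i, x). cylop L ks i x) qs) \<subseteq> A"
    using cylop_closed[OF SH] FA ps qs r s by fastforce+
  ultimately have "le (bigmeet L (sum_list ks) ?R) (bigjoin L (sum_list ks) ?S)"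
    by (meson bigjoin_closed bigmeet_closed le_trans)
  then obtain i where i: "i < length ks" "mle L (ks ! i) (r i) (s i)"
    using L r s FA unfolding msalg_def axiom0_def by blast
  then have "s i \<in> F i" using F r s unfolding prime_filter_def by blast
  with s i(1) show False by blast
qed

theorem lemma3p5:
  fixes L :: "'a msa" and ks :: "nat list" and F :: "nat \<Rightarrow> 'a set"
  assumes "msalg L"
    and "\<forall>i<length ks. prime_filter L (ks ! i) (F i)"
  shows "\<exists>G. prime_filter L (sum_list ks) G \<and>
           (\<forall>i<length ks. \<forall>r\<in>car L (ks ! i). cylop L ks i r \<in> G \<longleftrightarrow> r \<in> F i)"
proof -
  interpret lattice_sort L "sum_list ks" using assms(1) by (rule msalg_lattice_sort)
  define c where "c = (\<lambda>(i, x). cylop L ks i x)"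
  define P where "P = {(i, r). i < length ks \<and> r \<in> F i}"
  define Q where "Q = {(i, s). i < length ks \<and> s \<in> car L (ks ! i) - F i}"
  have "subst_hom L" using assms(1) by (simp add: msalg_def)
  moreover have "F i \<subseteq> car L (ks ! i)" if "i < length ks" for i
    using assms(2) that by (simp add: prime_filter_def)
  ultimately have closed: "c ` P \<subseteq> A" "c ` Q \<subseteq> A"
    unfolding c_def P_def Q_def by (auto intro: cylop_closed)
  have separated: "\<not> le (bigmeet L (sum_list ks) xs) (bigjoin L (sum_list ks) ys)"
    if "set xs \<subseteq> c ` P" "set ys \<subseteq> c ` Q" for xs ys
  proof -
    have "xs \<in> lists (c ` P)" "ys \<in> lists (c ` Q)"
      using that by (simp_all add: in_lists_conv_set subset_iff)
    then obtain ps qs where ps: "ps \<in> lists P" "xs = map c ps" and qs: "qs \<in> lists Q" "ys = map c qs"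
      unfolding lists_image by blast
    have "\<forall>(i, r)\<in>set ps. i < length ks \<and> r \<in> F i"
      "\<forall>(i, s)\<in>set qs. i < length ks \<and> s \<in> car L (ks ! i) - F i"
      using ps(1) qs(1) unfolding P_def Q_def in_lists_conv_set by auto
    from cylinders_meet_not_below_join[OF assms this] show ?thesis
      unfolding ps(2) qs(2) c_def .
  qed
  obtain G where G: "prime_filter L (sum_list ks) G" "c ` P \<subseteq> G" "G \<inter> c ` Q = {}"
    using prime_filter_separation[OF closed separated] by blast
  have "cylop L ks i r \<in> G \<longleftrightarrow> r \<in> F i" if "i < length ks" "r \<in> car L (ks ! i)" for i r
  proof -
    have "cylop L ks i r = c (i, r)" by (simp add: c_def)
    moreover have "(i, r) \<in> P \<or> (i, r) \<in> Q" "(i, r) \<in> P \<longleftrightarrow> r \<in> F i"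
      using that by (auto simp: P_def Q_def)
    ultimately show ?thesis using G(2,3) by (metis IntI empty_iff image_eqI subsetD)
  qed
  with G(1) show ?thesis by blast
qed

end
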